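(* Let $(\Omega,d)$ be an $A$-uniform space with completion $\overline\Omega$, and let $a\in\partial\Omega=\overline\Omega\setminus\Omega$. Then $\overline\Omega\setminus\{a\}$ is locally annularly quasiconvex around $a$ with $\Lambda=4A$.
   Context: $A$-uniform: $(\Omega,d)$ noncomplete and any $x,y\in\Omega$ are joined by an arc-length parametrized curve $\gamma:[0,l]\to\Omega$ with $l\le A\,d(x,y)$ and $\operatorname{dist}(\gamma(t),\partial\Omega)\ge\frac1A\min\{t,l-t\}$. A metric space $Z$ is locally annularly quasiconvex around $x_0$ if there exist $\Lambda\ge2$ and $r_0>0$ such that for every $0<r\le r_0$, each pair of points $x,y\in B(x_0,2r)\setminus B(x_0,r)$ can be connected within $B(x_0,\Lambda r)\setminus B(x_0,r/\Lambda)$ by a curve of length at most $\Lambda d(x,y)$. *)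

theory Defs
  imports "HOL-Analysis.Analysis" "HOL-Library.Extended_Real"
begin

definition curve_length :: "(real \<Rightarrow> 'a::metric_space) \<Rightarrow> real \<Rightarrow> real \<Rightarrow> ereal" where
  "curve_length g a b =
     (SUP pn \<in> {(p, n). mono_on {..n} (p :: nat \<Rightarrow> real) \<and> p 0 = a \<and> p n = b}.
        ereal (\<Sum>i<snd pn. dist (g (fst pn i)) (g (fst pn (Suc i)))))"

definition arclength_param :: "(real \<Rightarrow> 'a::metric_space) \<Rightarrow> real \<Rightarrow> bool" where
  "arclength_param g l \<longleftrightarrow> 0 \<le> l \<and> continuous_on {0..l} g \<and>
     (\<forall>s t. 0 \<le> s \<and> s \<le> t \<and> t \<le> l \<longrightarrow> curve_length g s t = ereal (t - s))"

text \<open>The boundary of \<Omega> inside its completion, realised as the closure of \<Omega>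
  in an ambient complete metric space.\<close>
definition mbdry :: "'a::metric_space set \<Rightarrow> 'a set" where
  "mbdry \<Omega> = closure \<Omega> - \<Omega>"

definition uniform_space :: "real \<Rightarrow> 'a::metric_space set \<Rightarrow> bool" where
  "uniform_space A \<Omega> \<longleftrightarrow> \<not> complete \<Omega> \<and>
     (\<forall>x\<in>\<Omega>. \<forall>y\<in>\<Omega>. \<exists>g l. arclength_param g l \<and> g 0 = x \<and> g l = y \<and>
        g ` {0..l} \<subseteq> \<Omega> \<and> l \<le> A * dist x y \<and>
        (\<forall>t\<in>{0..l}. infdist (g t) (mbdry \<Omega>) \<ge> min t (l - t) / A))"

definition loc_annular_qc :: "'a::metric_space set \<Rightarrow> 'a \<Rightarrow> real \<Rightarrow> bool" where
  "loc_annular_qc Z x0 \<Lambda> \<longleftrightarrow> \<Lambda> \<ge> 2 \<and> (\<exists>r0>0. \<forall>r. 0 < r \<and> r \<le> r0 \<longrightarrow>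
     (\<forall>x\<in>Z \<inter> (ball x0 (2*r) - ball x0 r). \<forall>y\<in>Z \<inter> (ball x0 (2*r) - ball x0 r).
        \<exists>g. path g \<and> pathstart g = x \<and> pathfinish g = y \<and>
          path_image g \<subseteq> Z \<inter> (ball x0 (\<Lambda>*r) - ball x0 (r/\<Lambda>)) \<and>
          curve_length g 0 1 \<le> ereal (\<Lambda> * dist x y)))"

end

theory Submission
  imports Defs
begin

text \<open>Approximate x by points s n of \<Omega> with dist (s n) x < \<epsilon> 2^(-n). A uniform curve from
  s (n+1) to s n has length at most A dist (s (n+1)) (s n) < (3/2) A \<epsilon> 2^(-n), and stays at
  distance at least r/(4A) from a: away from its endpoints by the cigar condition, near them by
  the triangle inequality. Running the n-th such curve on [2^(-n-1), 2^(-n)] gives a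
  3A\<epsilon>-Lipschitz curve from x to s 0 inside the annulus, and likewise for y. A uniform curve
  between the two approximants closes the gap; for \<epsilon> \<le> dist x y / 3 the three pieces,
  run on [0,1/4], [1/4,3/4] and [3/4,1], form a 4A dist x y-Lipschitz curve.\<close>

section \<open>Lipschitz curves and their length\<close>

lemma arclength_param_lipschitz:
  assumes "arclength_param g l"
  shows "1-lipschitz_on {0..l} g"
proof (rule lipschitz_on_leI)
  fix s t assume st: "s \<in> {0..l}" "t \<in> {0..l}" "s \<le> t"
  define p where "p = (\<lambda>i::nat. if i = 0 then s else t)"
  have "(p, 1) \<in> {(p, n). mono_on {..n} p \<and> p 0 = s \<and> p n = t}"
    using st by (auto simp: p_def mono_on_def)
  then have "ereal (dist (g s) (g t)) \<le> curve_length g s t"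
    unfolding curve_length_def by (rule SUP_upper2) (simp add: p_def)
  also have "\<dots> = ereal (t - s)"
    using assms st unfolding arclength_param_def by auto
  finally show "dist (g s) (g t) \<le> 1 * dist s t"
    using st by (simp add: dist_real_def)
qed simp

lemma curve_length_le_lipschitz:
  assumes "L-lipschitz_on {a..b} g"
  shows "curve_length g a b \<le> ereal (L * (b - a))"
  unfolding curve_length_def
proof (rule SUP_least)
  fix pn assume "pn \<in> {(p, n). mono_on {..n} (p :: nat \<Rightarrow> real) \<and> p 0 = a \<and> p n = b}"
  then obtain p n where pn: "pn = (p, n)" and mono: "mono_on {..n} p"
    and p0: "p 0 = a" and pn1: "p n = b"
    by auto
  have le: "p i \<le> p j" if "i \<le> j" "j \<le> n" for i j
    using mono that by (auto simp: mono_on_def)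
  have range: "p i \<in> {a..b}" if "i \<le> n" for i
    using le[of 0 i] le[of i n] that p0 pn1 by auto
  have "(\<Sum>i<n. dist (g (p i)) (g (p (Suc i)))) \<le> (\<Sum>i<n. L * (p (Suc i) - p i))"
  proof (rule sum_mono)
    fix i assume "i \<in> {..<n}"
    then have "dist (g (p i)) (g (p (Suc i))) \<le> L * dist (p i) (p (Suc i))"
      by (intro lipschitz_onD[OF assms] range) auto
    also have "dist (p i) (p (Suc i)) = p (Suc i) - p i"
      using le[of i "Suc i"] \<open>i \<in> {..<n}\<close> by (simp add: dist_real_def)
    finally show "dist (g (p i)) (g (p (Suc i))) \<le> L * (p (Suc i) - p i)" .
  qed
  also have "\<dots> = L * (b - a)"
    by (simp add: sum_distrib_left[symmetric] sum_lessThan_telescope p0 pn1)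
  finally show "ereal (\<Sum>i<snd pn. dist (g (fst pn i)) (g (fst pn (Suc i)))) \<le> ereal (L * (b - a))"
    by (simp add: pn)
qed

lemma lipschitz_on_affine_reparam:
  fixes f :: "real \<Rightarrow> 'a::metric_space"
  assumes "L-lipschitz_on T f" "(\<lambda>s. c * s + d) ` S \<subseteq> T"
  shows "(\<bar>c\<bar> * L)-lipschitz_on S (\<lambda>s. f (c * s + d))"
proof -
  have "\<bar>c\<bar>-lipschitz_on S (\<lambda>s. c * s + d)"
    by (rule lipschitz_onI) (auto simp: dist_real_def abs_mult[symmetric] algebra_simps)
  from lipschitz_on_compose2[OF this lipschitz_on_subset[OF assms]] show ?thesis
    by (simp add: mult.commute)
qed

lemma lipschitz_on_extend_to_left_endpoint:
  fixes h :: "real \<Rightarrow> 'a::metric_space"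
  assumes lip: "L-lipschitz_on {a<..b} h"
    and e: "e \<longlonglongrightarrow> a" "\<And>n. e n \<in> {a<..b}" and he: "(\<lambda>n. h (e n)) \<longlonglongrightarrow> h a"
  shows "L-lipschitz_on {a..b} h"
proof -
  have endpoint: "dist (h a) (h t) \<le> L * dist a t" "dist (h t) (h a) \<le> L * dist t a"
    if t: "t \<in> {a<..b}" for t
  proof -
    have "(\<lambda>n. L * dist (e n) t - dist (h (e n)) (h t)) \<longlonglongrightarrow> L * dist a t - dist (h a) (h t)"
      by (intro tendsto_intros e he)
    moreover have "L * dist (e n) t - dist (h (e n)) (h t) \<ge> 0" for n
      using lipschitz_onD[OF lip e(2) t] by simp
    ultimately have "dist (h a) (h t) \<le> L * dist a t"
      using LIMSEQ_le_const[of _ _ 0] by fastforce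
    then show "dist (h a) (h t) \<le> L * dist a t" "dist (h t) (h a) \<le> L * dist t a"
      by (simp_all add: dist_commute)
  qed
  show ?thesis
  proof (rule lipschitz_onI)
    fix s t assume "s \<in> {a..b}" "t \<in> {a..b}"
    then consider "s = a" "t = a" | "s = a" "t \<in> {a<..b}" | "t = a" "s \<in> {a<..b}"
      | "s \<in> {a<..b}" "t \<in> {a<..b}"
      by fastforce
    then show "dist (h s) (h t) \<le> L * dist s t"
    proof cases
      case 1
      then show ?thesis by simp
    next
      case 2
      then show ?thesis using endpoint(1)[of t] by simp
    next
      case 3
      then show ?thesis using endpoint(2)[of s] by simp
    next
      case 4
      then show ?thesis by (rule lipschitz_onD[OF lip])
    qed
  qed (rule lipschitz_on_nonneg[OF lip])
qed

lemma closure_geometric_approx: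
  assumes "p \<in> closure S" "\<epsilon> > 0"
  obtains s where "\<And>n. s n \<in> S" "\<And>n. dist (s n) p < \<epsilon> * (1/2) ^ n" "s \<longlonglongrightarrow> p"
proof -
  have "\<exists>u\<in>S. dist u p < \<epsilon> * (1/2) ^ n" for n :: nat
  proof -
    have "\<epsilon> * (1/2) ^ n > 0"
      using \<open>\<epsilon> > 0\<close> by simp
    then show ?thesis
      using assms(1) unfolding closure_approachable by blast
  qed
  then obtain s where s: "\<And>n. s n \<in> S" "\<And>n. dist (s n) p < \<epsilon> * (1/2) ^ n"
    by metis
  have "(\<lambda>n. \<epsilon> * (1/2::real) ^ n) \<longlonglongrightarrow> 0"
    using tendsto_mult_left[OF LIMSEQ_power_zero, of "1/2::real" \<epsilon>] by simp
  then have "(\<lambda>n. dist (s n) p) \<longlonglongrightarrow> 0"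
    by (rule Lim_null_comparison[OF always_eventually, rotated]) (use s(2) in \<open>simp add: less_imp_le\<close>)
  then have "s \<longlonglongrightarrow> p"
    by (rule tendsto_dist_iff[THEN iffD2])
  with s show ?thesis by (rule that)
qed

section \<open>Concatenating a sequence of curves accumulating at a point\<close>

definition dyadic_index :: "real \<Rightarrow> nat" where
  "dyadic_index s = (LEAST n. (1/2) ^ Suc n < s)"

lemma dyadic_index_eqI:
  assumes "(1/2) ^ Suc n < s" "s \<le> (1/2) ^ n"
  shows "dyadic_index s = n"
  unfolding dyadic_index_def
proof (rule Least_equality)
  fix m assume "(1/2::real) ^ Suc m < s"
  with assms(2) have "(1/2::real) ^ Suc m < (1/2) ^ n"
    by linarith
  then have "n < Suc m"
    using power_strict_decreasing_iff[of "1/2::real" "Suc m" n] by linarith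
  then show "n \<le> m"
    by simp
qed (fact assms(1))

lemma dyadic_index_bounds:
  assumes "0 < s" "s \<le> 1"
  shows "(1/2) ^ Suc (dyadic_index s) < s" "s \<le> (1/2) ^ dyadic_index s"
proof -
  obtain n where "(1/2::real) ^ n < s"
    using real_arch_pow_inv[OF assms(1), of "1/2"] by auto
  moreover have "(1/2::real) ^ Suc n \<le> (1/2) ^ n"
    by (simp add: power_decreasing)
  ultimately have "\<exists>n. (1/2::real) ^ Suc n < s"
    by (meson le_less_trans)
  then show lower: "(1/2) ^ Suc (dyadic_index s) < s"
    unfolding dyadic_index_def by (rule LeastI_ex)
  show "s \<le> (1/2) ^ dyadic_index s"
  proof (cases "dyadic_index s")
    case (Suc m)
    then have "\<not> (1/2::real) ^ Suc m < s"
      unfolding dyadic_index_def by (metis lessI not_less_Least)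
    with Suc show ?thesis by simp
  qed (use assms in simp)
qed

lemma dyadic_rescale_in_unit_interval:
  assumes "s \<in> {(1/2) ^ Suc n..(1/2) ^ n}"
  shows "2 ^ Suc n * s - 1 \<in> {0..1::real}"
proof -
  have "(2::real) ^ Suc n * (1/2) ^ Suc n \<le> 2 ^ Suc n * s" "(2::real) ^ Suc n * s \<le> 2 ^ Suc n * (1/2) ^ n"
    using assms by (auto intro: mult_left_mono)
  then show ?thesis
    by (simp add: power_one_over)
qed

text \<open>The curve c n is run on [2^(-n-1), 2^(-n)], so the curves accumulate at the
  parameter 0, which is sent to x.\<close>

definition dyadic_concat :: "(nat \<Rightarrow> real \<Rightarrow> 'a) \<Rightarrow> 'a \<Rightarrow> real \<Rightarrow> 'a" where
  "dyadic_concat c x s =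
     (if s \<le> 0 then x else c (dyadic_index s) (2 ^ Suc (dyadic_index s) * s - 1))"

lemma dyadic_concat_eq:
  assumes link: "\<And>n. c (Suc n) 1 = c n 0" and s: "s \<in> {(1/2) ^ Suc n..(1/2) ^ n}"
  shows "dyadic_concat c x s = c n (2 ^ Suc n * s - 1)"
proof -
  have "0 < (1/2::real) ^ Suc n"
    by simp
  with s have "0 < s"
    by (meson atLeastAtMost_iff less_le_trans)
  then have unfold: "dyadic_concat c x s = c (dyadic_index s) (2 ^ Suc (dyadic_index s) * s - 1)"
    by (simp add: dyadic_concat_def)
  show ?thesis
  proof (cases "s = (1/2) ^ Suc n")
    case True
    have "dyadic_index s = Suc n"
      unfolding True by (rule dyadic_index_eqI) simp_all
    with True unfold have "dyadic_concat c x s = c (Suc n) 1"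
      by (simp add: power_one_over)
    also have "\<dots> = c n (2 ^ Suc n * s - 1)"
      by (simp add: True link power_one_over)
    finally show ?thesis .
  next
    case False
    with s have "dyadic_index s = n"
      by (intro dyadic_index_eqI) auto
    with unfold show ?thesis
      by simp
  qed
qed

lemma dyadic_concat_at_dyadic:
  assumes "\<And>n. c (Suc n) 1 = c n 0"
  shows "dyadic_concat c x ((1/2) ^ n) = c n 1"
proof -
  have "(1/2::real) ^ Suc n \<le> (1/2) ^ n"
    by (simp add: power_decreasing)
  then have "dyadic_concat c x ((1/2) ^ n) = c n (2 ^ Suc n * (1/2) ^ n - 1)"
    by (intro dyadic_concat_eq assms) simp
  then show ?thesis
    by (simp add: power_one_over)
qed

lemma dyadic_concat_image: "dyadic_concat c x ` {0..1} \<subseteq> insert x (\<Union>n. c n ` {0..1})"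
proof
  fix z assume "z \<in> dyadic_concat c x ` {0..1}"
  then obtain s where s: "s \<in> {0..1}" and z: "z = dyadic_concat c x s"
    by auto
  show "z \<in> insert x (\<Union>n. c n ` {0..1})"
  proof (cases "s = 0")
    case False
    with s have "s \<in> {(1/2) ^ Suc (dyadic_index s)..(1/2) ^ dyadic_index s}"
      using dyadic_index_bounds[of s] by auto
    then have "2 ^ Suc (dyadic_index s) * s - 1 \<in> {0..1}"
      by (rule dyadic_rescale_in_unit_interval)
    with False s z have "z \<in> c (dyadic_index s) ` {0..1}"
      by (simp add: dyadic_concat_def)
    then show ?thesis
      by blast
  qed (simp add: z dyadic_concat_def)
qed

lemma lipschitz_dyadic_concat_tail:
  assumes link: "\<And>n. c (Suc n) 1 = c n 0"
    and lip: "\<And>n. (K * (1/2) ^ n)-lipschitz_on {0..1} (c n)"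
  shows "(2 * K)-lipschitz_on {(1/2) ^ n..1} (dyadic_concat c x)"
proof (induction n)
  case 0
  show ?case
    using lipschitz_on_nonneg[OF lip[of 0]] by simp
next
  case (Suc n)
  have "(\<bar>2 ^ Suc n\<bar> * (K * (1/2) ^ n))-lipschitz_on {(1/2) ^ Suc n..(1/2) ^ n}
      (\<lambda>s. c n (2 ^ Suc n * s + - 1))"
    by (rule lipschitz_on_affine_reparam[OF lip])
      (use dyadic_rescale_in_unit_interval in fastforce)
  then have piece: "(2 * K)-lipschitz_on {(1/2) ^ Suc n..(1/2) ^ n} (\<lambda>s. c n (2 ^ Suc n * s - 1))"
    by (simp add: power_one_over)
  have "(2 * K)-lipschitz_on {(1/2) ^ Suc n..1}
      (\<lambda>s. if s \<le> (1/2) ^ n then c n (2 ^ Suc n * s - 1) else dyadic_concat c x s)"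
    by (rule lipschitz_on_concat[OF piece Suc.IH])
      (simp add: dyadic_concat_eq[where c = c, OF link, of _ n])
  then show ?case
  proof (rule lipschitz_on_transform)
    fix s :: real assume "s \<in> {(1/2) ^ Suc n..1}"
    then show "dyadic_concat c x s =
        (if s \<le> (1/2) ^ n then c n (2 ^ Suc n * s - 1) else dyadic_concat c x s)"
      using dyadic_concat_eq[where c = c, OF link, of s n] by auto
  qed
qed

lemma lipschitz_dyadic_concat:
  assumes link: "\<And>n. c (Suc n) 1 = c n 0"
    and lip: "\<And>n. (K * (1/2) ^ n)-lipschitz_on {0..1} (c n)"
    and lim: "(\<lambda>n. c n 1) \<longlonglongrightarrow> x"
  shows "(2 * K)-lipschitz_on {0..1} (dyadic_concat c x)"
proof (rule lipschitz_on_extend_to_left_endpoint)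
  show "(2 * K)-lipschitz_on {0<..1} (dyadic_concat c x)"
  proof (rule lipschitz_onI)
    fix s t :: real assume "s \<in> {0<..1}" "t \<in> {0<..1}"
    moreover obtain n where "(1/2) ^ n < min s t"
      using real_arch_pow_inv[of "min s t" "1/2"] \<open>s \<in> {0<..1}\<close> \<open>t \<in> {0<..1}\<close> by auto
    ultimately show "dist (dyadic_concat c x s) (dyadic_concat c x t) \<le> 2 * K * dist s t"
      by (intro lipschitz_onD[OF lipschitz_dyadic_concat_tail[OF link lip, of n]]) auto
  qed (use lipschitz_on_nonneg[OF lip[of 0]] in simp)
  show "(\<lambda>n. (1/2::real) ^ n) \<longlonglongrightarrow> 0"
    by (rule LIMSEQ_power_zero) simp
  show "(1/2) ^ n \<in> {0<..1::real}" for n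
    by (simp add: power_le_one)
  show "(\<lambda>n. dyadic_concat c x ((1/2) ^ n)) \<longlonglongrightarrow> dyadic_concat c x 0"
    unfolding dyadic_concat_at_dyadic[where c = c, OF link] by (simp add: dyadic_concat_def lim)
qed

section \<open>Curves in a uniform space near a boundary point\<close>

lemma uniform_space_const_ge_1:
  assumes U: "uniform_space A \<Omega>" and a: "a \<in> mbdry \<Omega>"
  shows "A \<ge> 1"
proof -
  from a have a_cl: "a \<in> closure \<Omega>" and "a \<notin> \<Omega>"
    by (auto simp: mbdry_def)
  then obtain u where u: "u \<in> \<Omega>" "u \<noteq> a"
    by (metis closure_empty empty_iff equals0I)
  then obtain v where v: "v \<in> \<Omega>" "dist v a < dist u a"
    using a_cl unfolding closure_approachable by (metis zero_less_dist_iff)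
  then have "u \<noteq> v"
    by auto
  obtain g l where g: "arclength_param g l" "g 0 = u" "g l = v" "l \<le> A * dist u v"
    using U u v unfolding uniform_space_def by blast
  have "dist u v \<le> 1 * dist 0 l"
    using lipschitz_onD[OF arclength_param_lipschitz[OF g(1)], of 0 l] g(1)
    by (simp add: g arclength_param_def)
  also have "\<dots> = l"
    using g(1) by (simp add: arclength_param_def)
  finally have "dist u v \<le> A * dist u v"
    using g(4) by simp
  with \<open>u \<noteq> v\<close> show ?thesis
    by simp
qed

lemma point_on_uniform_curve_in_annulus:
  fixes a u v z :: "'a::metric_space"
  assumes A: "A \<ge> 1" and t: "0 \<le> t" "t \<le> l" and l: "l \<le> A * dist u v"
    and du: "dist u z \<le> t" and dv: "dist z v \<le> l - t"
    and cigar: "min t (l - t) / A \<le> dist z a"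
    and u: "u \<in> ball a (2 * r) - ball a (r / 2)" and v: "v \<in> ball a (2 * r) - ball a (r / 2)"
  shows "z \<in> ball a (4 * A * r) - ball a (r / (4 * A))"
proof -
  have tri: "dist a u \<le> dist a z + dist u z" "dist a v \<le> dist a z + dist z v"
    "dist a z \<le> dist a u + dist u z" "dist a z \<le> dist a v + dist z v"
    "dist u v \<le> dist a u + dist a v"
    by (metis dist_commute dist_triangle)+
  from u v have r: "r / 2 \<le> dist a u" "dist a u < 2 * r" "r / 2 \<le> dist a v" "dist a v < 2 * r"
    by auto
  then have "r > 0"
    by linarith
  have lower: "r / (4 * A) \<le> dist a z"
  proof (cases "r / 4 \<le> min t (l - t)")
    case True
    then have "r / (4 * A) \<le> min t (l - t) / A"
      using A by (simp add: divide_right_mono flip: divide_divide_eq_left)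
    with cigar show ?thesis
      by (simp add: dist_commute)
  next
    case False
    moreover have "r / (4 * A) \<le> r / 4"
      using A \<open>r > 0\<close> by (intro divide_left_mono) auto
    ultimately show ?thesis
      using tri(1,2) du dv r by linarith
  qed
  have "A * dist u v < A * (4 * r)"
    using tri(5) r A by (intro mult_strict_left_mono) auto
  moreover have "r \<le> A * r"
    using A \<open>r > 0\<close> by simp
  ultimately have "dist a z < 4 * A * r"
    using tri(3,4) du dv r l by linarith
  with lower show ?thesis
    by simp
qed

lemma uniform_curve_in_annulus:
  assumes U: "uniform_space A \<Omega>" and a: "a \<in> mbdry \<Omega>"
    and u: "u \<in> \<Omega> \<inter> (ball a (2 * r) - ball a (r / 2))"
    and v: "v \<in> \<Omega> \<inter> (ball a (2 * r) - ball a (r / 2))"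
  obtains c :: "real \<Rightarrow> 'a::metric_space" where "(A * dist u v)-lipschitz_on {0..1} c" "c 0 = u" "c 1 = v"
    "c ` {0..1} \<subseteq> \<Omega> \<inter> (ball a (4 * A * r) - ball a (r / (4 * A)))"
proof -
  obtain g l where g: "arclength_param g l" "g 0 = u" "g l = v" "g ` {0..l} \<subseteq> \<Omega>"
    "l \<le> A * dist u v" "\<forall>t\<in>{0..l}. infdist (g t) (mbdry \<Omega>) \<ge> min t (l - t) / A"
    using U u v unfolding uniform_space_def by blast
  have "l \<ge> 0"
    using g(1) by (simp add: arclength_param_def)
  have g_lip: "1-lipschitz_on {0..l} g"
    by (rule arclength_param_lipschitz[OF g(1)])
  have scaled: "l * \<tau> \<in> {0..l}" if "\<tau> \<in> {0..1}" for \<tau>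
    using that \<open>l \<ge> 0\<close> by (auto intro: mult_left_le)
  have "(\<bar>l\<bar> * 1)-lipschitz_on {0..1} (\<lambda>\<tau>. g (l * \<tau> + 0))"
    by (rule lipschitz_on_affine_reparam[OF g_lip]) (use scaled in auto)
  then have "(A * dist u v)-lipschitz_on {0..1} (\<lambda>\<tau>. g (l * \<tau>))"
    using g(5) \<open>l \<ge> 0\<close> by (auto intro: lipschitz_on_le)
  moreover have "g (l * \<tau>) \<in> \<Omega> \<inter> (ball a (4 * A * r) - ball a (r / (4 * A)))"
    if "\<tau> \<in> {0..1}" for \<tau>
  proof -
    define t where "t = l * \<tau>"
    have t: "t \<in> {0..l}"
      using scaled[OF that] by (simp add: t_def)
    have "dist u (g t) \<le> t" "dist (g t) v \<le> l - t"
      using lipschitz_onD[OF g_lip, of 0 t] lipschitz_onD[OF g_lip, of t l] t \<open>l \<ge> 0\<close>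
      by (auto simp: g(2,3) dist_real_def)
    moreover have "min t (l - t) / A \<le> dist (g t) a"
      using g(6) t infdist_le[OF a, of "g t"] by fastforce
    ultimately have "g t \<in> ball a (4 * A * r) - ball a (r / (4 * A))"
      using point_on_uniform_curve_in_annulus[OF uniform_space_const_ge_1[OF U a] _ _ g(5)] t u v
      by auto
    with g(4) t show ?thesis
      by (auto simp: t_def)
  qed
  ultimately show ?thesis
    using g(2,3) by (intro that[of "\<lambda>\<tau>. g (l * \<tau>)"]) auto
qed

text \<open>The middle curve gets half of the parameter interval, since its Lipschitz constant is
  of the order A dist x y while the outer curves are short.\<close>

definition join3 :: "(real \<Rightarrow> 'a) \<Rightarrow> (real \<Rightarrow> 'a) \<Rightarrow> (real \<Rightarrow> 'a) \<Rightarrow> real \<Rightarrow> 'a" where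
  "join3 f g h s = (if s \<le> 1/4 then f (4 * s) else if s \<le> 3/4 then g (2 * s - 1/2) else h (4 * s - 3))"

lemma lipschitz_join3:
  assumes f: "K-lipschitz_on {0..1} f" and g: "M-lipschitz_on {0..1} g"
    and h: "N-lipschitz_on {0..1} h"
    and fg: "f 1 = g 0" and gh: "g 1 = h 0" and L: "4 * K \<le> L" "2 * M \<le> L" "4 * N \<le> L"
  shows "L-lipschitz_on {0..1} (join3 f g h)"
proof -
  have "(\<bar>4\<bar> * K)-lipschitz_on {0..1/4} (\<lambda>s. f (4 * s + 0))"
    by (rule lipschitz_on_affine_reparam[OF f]) auto
  then have F: "L-lipschitz_on {0..1/4} (\<lambda>s. f (4 * s))"
    using L(1) by (auto intro: lipschitz_on_le)
  have "(\<bar>2\<bar> * M)-lipschitz_on {1/4..3/4} (\<lambda>s. g (2 * s + - 1/2))"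
    by (rule lipschitz_on_affine_reparam[OF g]) auto
  then have G: "L-lipschitz_on {1/4..3/4} (\<lambda>s. g (2 * s - 1/2))"
    using L(2) by (auto intro: lipschitz_on_le)
  have "(\<bar>4\<bar> * N)-lipschitz_on {3/4..1} (\<lambda>s. h (4 * s + - 3))"
    by (rule lipschitz_on_affine_reparam[OF h]) auto
  then have H: "L-lipschitz_on {3/4..1} (\<lambda>s. h (4 * s - 3))"
    using L(3) by (auto intro: lipschitz_on_le)
  have "L-lipschitz_on {1/4..1} (\<lambda>s. if s \<le> 3/4 then g (2 * s - 1/2) else h (4 * s - 3))"
    by (rule lipschitz_on_concat[OF G H]) (simp add: gh)
  from lipschitz_on_concat[OF F this] show ?thesis
    unfolding join3_def by (simp add: fg)
qed

lemma join3_image: "join3 f g h ` {0..1} \<subseteq> f ` {0..1} \<union> g ` {0..1} \<union> h ` {0..1}"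
  by (auto simp: join3_def)

lemma join3_endpoints: "join3 f g h 0 = f 0" "join3 f g h 1 = h 1"
  by (simp_all add: join3_def)

lemma uniform_curves_along_sequence:
  fixes \<Omega> :: "'a::metric_space set"
  assumes U: "uniform_space A \<Omega>" and a: "a \<in> mbdry \<Omega>"
    and s: "\<And>n. s n \<in> \<Omega> \<inter> (ball a (2 * r) - ball a (r / 2))"
  obtains c :: "nat \<Rightarrow> real \<Rightarrow> 'a"
  where "\<And>n. (A * dist (s (Suc n)) (s n))-lipschitz_on {0..1} (c n)"
    "\<And>n. c n 0 = s (Suc n)" "\<And>n. c n 1 = s n"
    "\<And>n. c n ` {0..1} \<subseteq> \<Omega> \<inter> (ball a (4 * A * r) - ball a (r / (4 * A)))"
proof -
  have "\<exists>c :: real \<Rightarrow> 'a. (A * dist (s (Suc n)) (s n))-lipschitz_on {0..1} c \<and>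
      c 0 = s (Suc n) \<and> c 1 = s n \<and> c ` {0..1} \<subseteq> \<Omega> \<inter> (ball a (4 * A * r) - ball a (r / (4 * A)))"
    for n
    by (metis uniform_curve_in_annulus[OF U a s s])
  then obtain c :: "nat \<Rightarrow> real \<Rightarrow> 'a" where
    "\<And>n. (A * dist (s (Suc n)) (s n))-lipschitz_on {0..1} (c n) \<and> c n 0 = s (Suc n) \<and>
      c n 1 = s n \<and> c n ` {0..1} \<subseteq> \<Omega> \<inter> (ball a (4 * A * r) - ball a (r / (4 * A)))"
    by metis
  then show ?thesis
    by (intro that[of c]) auto
qed

lemma uniform_curve_from_closure_point:
  fixes \<Omega> :: "'a::metric_space set"
  assumes U: "uniform_space A \<Omega>" and a: "a \<in> mbdry \<Omega>" and p: "p \<in> closure \<Omega>"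
    and "\<epsilon> > 0" and small: "ball p \<epsilon> \<subseteq> ball a (2 * r) - ball a (r / 2)"
  obtains h :: "real \<Rightarrow> 'a" and q where "(3 * A * \<epsilon>)-lipschitz_on {0..1} h" "h 0 = p" "h 1 = q"
    "h ` {0..1} \<subseteq> insert p (\<Omega> \<inter> (ball a (4 * A * r) - ball a (r / (4 * A))))"
    "q \<in> \<Omega> \<inter> ball p \<epsilon>"
proof -
  obtain s where s\<Omega>: "\<And>n. s n \<in> \<Omega>" and s_dist: "\<And>n. dist (s n) p < \<epsilon> * (1/2) ^ n"
    and s_lim: "s \<longlonglongrightarrow> p"
    using closure_geometric_approx[OF p \<open>\<epsilon> > 0\<close>] by blast
  have "\<epsilon> * (1/2) ^ n \<le> \<epsilon>" for n :: nat
    using \<open>\<epsilon> > 0\<close> by (simp add: mult_left_le power_le_one)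
  then have "dist (s n) p < \<epsilon>" for n
    using s_dist[of n] by (meson less_le_trans)
  then have s_ball: "s n \<in> \<Omega> \<inter> ball p \<epsilon>" for n
    using s\<Omega> by (simp add: dist_commute)
  have s_annulus: "s n \<in> \<Omega> \<inter> (ball a (2 * r) - ball a (r / 2))" for n
    using s_ball[of n] small by blast
  obtain c :: "nat \<Rightarrow> real \<Rightarrow> 'a" where
    c_lip: "\<And>n. (A * dist (s (Suc n)) (s n))-lipschitz_on {0..1} (c n)"
    and c_ends: "\<And>n. c n 0 = s (Suc n)" "\<And>n. c n 1 = s n"
    and c_img: "\<And>n. c n ` {0..1} \<subseteq> \<Omega> \<inter> (ball a (4 * A * r) - ball a (r / (4 * A)))"
    using uniform_curves_along_sequence[where s = s, OF U a s_annulus] by blast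
  have "A \<ge> 0"
    using uniform_space_const_ge_1[OF U a] by simp
  have lip: "(3/2 * A * \<epsilon> * (1/2) ^ n)-lipschitz_on {0..1} (c n)" for n
  proof (rule lipschitz_on_le[OF c_lip])
    have "dist (s (Suc n)) (s n) \<le> dist (s (Suc n)) p + dist (s n) p"
      by (rule dist_triangle2)
    also have "\<dots> \<le> 3/2 * \<epsilon> * (1/2) ^ n"
      using s_dist[of n] s_dist[of "Suc n"] by simp
    finally have "A * dist (s (Suc n)) (s n) \<le> A * (3/2 * \<epsilon> * (1/2) ^ n)"
      using \<open>A \<ge> 0\<close> by (rule mult_left_mono)
    then show "A * dist (s (Suc n)) (s n) \<le> 3/2 * A * \<epsilon> * (1/2) ^ n"
      by (simp add: mult_ac)
  qed
  have link: "\<And>n. c (Suc n) 1 = c n 0"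
    by (simp add: c_ends)
  have "(2 * (3/2 * A * \<epsilon>))-lipschitz_on {0..1} (dyadic_concat c p)"
    by (rule lipschitz_dyadic_concat[OF link lip]) (simp add: c_ends s_lim)
  then have "(3 * A * \<epsilon>)-lipschitz_on {0..1} (dyadic_concat c p)"
    by (simp add: mult.assoc)
  moreover have "dyadic_concat c p 0 = p"
    by (simp add: dyadic_concat_def)
  moreover have "dyadic_concat c p 1 = s 0"
    using dyadic_concat_at_dyadic[where c = c, OF link, of p 0] by (simp add: c_ends)
  moreover have "dyadic_concat c p ` {0..1} \<subseteq> insert p (\<Omega> \<inter> (ball a (4 * A * r) - ball a (r / (4 * A))))"
    using dyadic_concat_image[of c p] c_img by blast
  ultimately show ?thesis
    using s_ball[of 0] by (rule that)
qed

lemma ball_subset_annulus: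
  fixes a p :: "'a::metric_space"
  assumes "r \<le> dist a p" "\<epsilon> \<le> r / 2" "dist a p + \<epsilon> \<le> 2 * r"
  shows "ball p \<epsilon> \<subseteq> ball a (2 * r) - ball a (r / 2)"
proof
  fix z assume "z \<in> ball p \<epsilon>"
  moreover have "dist a z \<le> dist a p + dist p z" "dist a p \<le> dist a z + dist p z"
    by (rule dist_triangle dist_triangle2)+
  ultimately show "z \<in> ball a (2 * r) - ball a (r / 2)"
    using assms by auto
qed

lemma lipschitz_on_reversepath:
  assumes "K-lipschitz_on {0..1} g"
  shows "K-lipschitz_on {0..1} (reversepath g)"
proof -
  have "(\<bar>-1\<bar> * K)-lipschitz_on {0..1} (\<lambda>s. g (- 1 * s + 1))"
    by (rule lipschitz_on_affine_reparam[OF assms]) auto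
  then show ?thesis
    by (simp add: reversepath_def)
qed

lemma lipschitz_join3_via_approximants:
  assumes hx: "(3 * A * \<epsilon>)-lipschitz_on {0..1} hx" "hx 1 = x'"
    and m: "(A * dist x' y')-lipschitz_on {0..1} m" "m 0 = x'" "m 1 = y'"
    and hy: "(3 * A * \<epsilon>)-lipschitz_on {0..1} hy" "hy 1 = y'"
    and close: "dist x x' < \<epsilon>" "dist y y' < \<epsilon>" and "3 * \<epsilon> \<le> dist x y" and "A \<ge> 0"
  shows "(4 * A * dist x y)-lipschitz_on {0..1} (join3 hx m (reversepath hy))"
proof (rule lipschitz_join3[OF hx(1) m(1) lipschitz_on_reversepath[OF hy(1)]])
  have "dist x' y' \<le> dist x x' + dist x y + dist y y'"
    by (metis dist_commute dist_triangle add_right_mono order_trans)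
  then have "dist x' y' \<le> 2 * dist x y"
    using close \<open>3 * \<epsilon> \<le> dist x y\<close> zero_le_dist[of x x'] by linarith
  from mult_left_mono[OF this \<open>A \<ge> 0\<close>]
  show "2 * (A * dist x' y') \<le> 4 * A * dist x y"
    by simp
  from mult_left_mono[OF \<open>3 * \<epsilon> \<le> dist x y\<close> \<open>A \<ge> 0\<close>]
  show "4 * (3 * A * \<epsilon>) \<le> 4 * A * dist x y" "4 * (3 * A * \<epsilon>) \<le> 4 * A * dist x y"
    by simp_all
qed (simp_all add: hx(2) m(2,3) hy(2) reversepath_def)

lemma lipschitz_curve_between_closure_points:
  fixes \<Omega> :: "'a::metric_space set"
  assumes U: "uniform_space A \<Omega>" and a: "a \<in> mbdry \<Omega>"
    and x: "x \<in> closure \<Omega> \<inter> (ball a (2 * r) - ball a r)"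
    and y: "y \<in> closure \<Omega> \<inter> (ball a (2 * r) - ball a r)"
  obtains g :: "real \<Rightarrow> 'a" where "(4 * A * dist x y)-lipschitz_on {0..1} g" "g 0 = x" "g 1 = y"
    "g ` {0..1} \<subseteq> {x, y} \<union> \<Omega> \<inter> (ball a (4 * A * r) - ball a (r / (4 * A)))"
proof (cases "x = y")
  case True
  then show ?thesis
    using lipschitz_on_constant[of "{0..1}" x] by (intro that[of "\<lambda>_. x"]) auto
next
  case False
  let ?S = "\<Omega> \<inter> (ball a (4 * A * r) - ball a (r / (4 * A)))"
  define \<epsilon> where "\<epsilon> = min (dist x y / 3) (min (r / 2) (2 * r - max (dist a x) (dist a y)))"
  have "\<epsilon> > 0"
    using False x y by (auto simp: \<epsilon>_def)
  have \<epsilon>_le: "3 * \<epsilon> \<le> dist x y" "\<epsilon> \<le> r / 2" "dist a x + \<epsilon> \<le> 2 * r" "dist a y + \<epsilon> \<le> 2 * r"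
    unfolding \<epsilon>_def by (simp_all add: min_def max_def)
  have small: "ball x \<epsilon> \<subseteq> ball a (2 * r) - ball a (r / 2)" "ball y \<epsilon> \<subseteq> ball a (2 * r) - ball a (r / 2)"
    by (rule ball_subset_annulus; use x y \<epsilon>_le in force)+
  obtain hx :: "real \<Rightarrow> 'a" and x' where hx: "(3 * A * \<epsilon>)-lipschitz_on {0..1} hx" "hx 0 = x"
    "hx 1 = x'" "hx ` {0..1} \<subseteq> insert x ?S" and x': "x' \<in> \<Omega> \<inter> ball x \<epsilon>"
    using uniform_curve_from_closure_point[OF U a _ \<open>\<epsilon> > 0\<close> small(1)] x by blast
  obtain hy :: "real \<Rightarrow> 'a" and y' where hy: "(3 * A * \<epsilon>)-lipschitz_on {0..1} hy" "hy 0 = y"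
    "hy 1 = y'" "hy ` {0..1} \<subseteq> insert y ?S" and y': "y' \<in> \<Omega> \<inter> ball y \<epsilon>"
    using uniform_curve_from_closure_point[OF U a _ \<open>\<epsilon> > 0\<close> small(2)] y by blast
  have "x' \<in> \<Omega> \<inter> (ball a (2 * r) - ball a (r / 2))" "y' \<in> \<Omega> \<inter> (ball a (2 * r) - ball a (r / 2))"
    using x' y' small by blast+
  then obtain m :: "real \<Rightarrow> 'a" where m: "(A * dist x' y')-lipschitz_on {0..1} m" "m 0 = x'"
    "m 1 = y'" "m ` {0..1} \<subseteq> ?S"
    by (rule uniform_curve_in_annulus[OF U a])
  have "A \<ge> 0"
    using uniform_space_const_ge_1[OF U a] by simp
  with x' y' \<epsilon>_le(1) have "(4 * A * dist x y)-lipschitz_on {0..1} (join3 hx m (reversepath hy))"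
    by (intro lipschitz_join3_via_approximants[OF hx(1,3) m(1-3) hy(1,3)]) simp_all
  moreover have "join3 hx m (reversepath hy) ` {0..1} \<subseteq> {x, y} \<union> ?S"
  proof -
    have "join3 hx m (reversepath hy) ` {0..1} \<subseteq> hx ` {0..1} \<union> m ` {0..1} \<union> hy ` {0..1}"
      using join3_image[of hx m "reversepath hy"] path_image_reversepath[of hy]
      by (simp add: path_image_def)
    also have "\<dots> \<subseteq> insert x ?S \<union> ?S \<union> insert y ?S"
      by (intro Un_mono hx(4) m(4) hy(4))
    finally show ?thesis
      by auto
  qed
  moreover have "join3 hx m (reversepath hy) 0 = x" "join3 hx m (reversepath hy) 1 = y"
    by (simp_all add: join3_endpoints hx(2) hy(2) reversepath_def)
  ultimately show ?thesis
    by (metis that)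
qed

lemma uniform_space_annular_path:
  fixes \<Omega> :: "'a::metric_space set"
  assumes U: "uniform_space A \<Omega>" and a: "a \<in> mbdry \<Omega>"
    and x: "x \<in> (closure \<Omega> - {a}) \<inter> (ball a (2 * r) - ball a r)"
    and y: "y \<in> (closure \<Omega> - {a}) \<inter> (ball a (2 * r) - ball a r)"
  shows "\<exists>g. path g \<and> pathstart g = x \<and> pathfinish g = y \<and>
    path_image g \<subseteq> (closure \<Omega> - {a}) \<inter> (ball a (4 * A * r) - ball a (r / (4 * A))) \<and>
    curve_length g 0 1 \<le> ereal (4 * A * dist x y)"
proof -
  obtain g :: "real \<Rightarrow> 'a" where g: "(4 * A * dist x y)-lipschitz_on {0..1} g" "g 0 = x" "g 1 = y"
    "g ` {0..1} \<subseteq> {x, y} \<union> \<Omega> \<inter> (ball a (4 * A * r) - ball a (r / (4 * A)))"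
    using lipschitz_curve_between_closure_points[OF U a] x y by blast
  have "A \<ge> 1"
    by (rule uniform_space_const_ge_1[OF U a])
  moreover have "r > 0"
    using x by auto
  ultimately have "r / (4 * A) \<le> r" "2 * r \<le> 4 * A * r"
    by (auto simp: field_simps)
  then have "{x, y} \<subseteq> ball a (4 * A * r) - ball a (r / (4 * A))"
    using x y by (auto intro: order.strict_trans2)
  moreover have "\<Omega> \<subseteq> closure \<Omega> - {a}"
    using a closure_subset by (auto simp: mbdry_def)
  ultimately have "path_image g \<subseteq> (closure \<Omega> - {a}) \<inter> (ball a (4 * A * r) - ball a (r / (4 * A)))"
    using g(4) x y unfolding path_image_def by blast
  moreover have "curve_length g 0 1 \<le> ereal (4 * A * dist x y)"
    using curve_length_le_lipschitz[OF g(1)] by simp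
  moreover have "path g"
    unfolding path_def by (rule lipschitz_on_continuous_on[OF g(1)])
  ultimately show ?thesis
    using g(2,3) unfolding pathstart_def pathfinish_def by blast
qed

theorem lemma9p9:
  fixes \<Omega> :: "'a::complete_space set" and A :: real and a :: 'a
  assumes "uniform_space A \<Omega>"
    and "a \<in> mbdry \<Omega>"
  shows "loc_annular_qc (closure \<Omega> - {a}) a (4 * A)"
  unfolding loc_annular_qc_def
  using uniform_space_const_ge_1[OF assms] uniform_space_annular_path[OF assms]
  by (intro conjI exI[of _ 1]) auto

end
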